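(* In the box problem with an exogenous ordering, every $\kappa$-thresholding policy is non-exposed. Moreover, the expected net value of running the $\kappa$-thresholding policy with target interval $X$ equals the expected value selected by the threshold stopping rule that observes the sequence $\kappa_1,\kappa_2,\ldots,\kappa_m$ and selects the first element belonging to $X$ (with value $0$ if none does).
   Context: Box problem: there are boxes $1,\ldots,m$. Box $i$ contains an independent non-negative random prize $v_i$ and has opening cost $c_i\ge0$. The priority $z_i$ is defined by $\mathbb{E}[(v_i-z_i)^+]=c_i$ (assumed well-defined), and the covered call value is $\kappa_i=\min\{v_i,z_i\}$. In the exogenous-ordering version, the searcher considers the boxes one by one in the order $1,\ldots,m$. For each box she decides whether to open it (paying $c_i$ and observing $v_i$) and, if opened, whether to claim its prize (and stop). She cannot return to a skipped box or to an unclaimed prize. The net value is the claimed prize (or $0$) minus the total cost of opened boxes. For a policy, let $A_i$ be the indicator that box $i$ is selected and $B_i$ the indicator that it is opened. The policy is non-exposed if $A_i=B_i$ at every sample point where $v_i>z_i$. A $\kappa$-thresholding policy with target interval $X=(\theta,\infty)$ or $X=[\theta,\infty)$ declines to open every box with $z_i\notin X$. For a box with $z_i\in X$, it opens the box and claims the prize if and only if $v_i\in X$. *)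

theory Defs
  imports "HOL-Probability.Probability"
begin

text \<open>Boxes are indexed 1..m. Prizes v i, costs c i, priorities z i are given.\<close>

definition covered_call :: "(nat \<Rightarrow> 'a \<Rightarrow> real) \<Rightarrow> (nat \<Rightarrow> real) \<Rightarrow> nat \<Rightarrow> 'a \<Rightarrow> real" where
  "covered_call v z i \<omega> = min (v i \<omega>) (z i)"

definition thr_open :: "(nat \<Rightarrow> real) \<Rightarrow> real set \<Rightarrow> (nat \<Rightarrow> 'a \<Rightarrow> real) \<Rightarrow> nat \<Rightarrow> 'a \<Rightarrow> bool" where
  "thr_open z X v i \<omega> \<longleftrightarrow> z i \<in> X \<and> (\<forall>j\<in>{1..<i}. \<not> (z j \<in> X \<and> v j \<omega> \<in> X))"

definition thr_select :: "(nat \<Rightarrow> real) \<Rightarrow> real set \<Rightarrow> (nat \<Rightarrow> 'a \<Rightarrow> real) \<Rightarrow> nat \<Rightarrow> 'a \<Rightarrow> bool" where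
  "thr_select z X v i \<omega> \<longleftrightarrow> thr_open z X v i \<omega> \<and> v i \<omega> \<in> X"

definition non_exposed :: "'a measure \<Rightarrow> nat \<Rightarrow> (nat \<Rightarrow> 'a \<Rightarrow> real) \<Rightarrow> (nat \<Rightarrow> real)
    \<Rightarrow> (nat \<Rightarrow> 'a \<Rightarrow> bool) \<Rightarrow> (nat \<Rightarrow> 'a \<Rightarrow> bool) \<Rightarrow> bool" where
  "non_exposed M m v z A B \<longleftrightarrow>
     (\<forall>i\<in>{1..m}. \<forall>\<omega>\<in>space M. v i \<omega> > z i \<longrightarrow> (A i \<omega> \<longleftrightarrow> B i \<omega>))"

definition net_value :: "nat \<Rightarrow> (nat \<Rightarrow> real) \<Rightarrow> (nat \<Rightarrow> 'a \<Rightarrow> real)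
    \<Rightarrow> (nat \<Rightarrow> 'a \<Rightarrow> bool) \<Rightarrow> (nat \<Rightarrow> 'a \<Rightarrow> bool) \<Rightarrow> 'a \<Rightarrow> real" where
  "net_value m c v A B \<omega> =
     (\<Sum>i\<in>{1..m}. of_bool (A i \<omega>) * v i \<omega>) - (\<Sum>i\<in>{1..m}. of_bool (B i \<omega>) * c i)"

definition threshold_stop_value :: "real set \<Rightarrow> nat \<Rightarrow> (nat \<Rightarrow> real) \<Rightarrow> real" where
  "threshold_stop_value X m x =
     (if \<exists>i\<in>{1..m}. x i \<in> X then x (LEAST i. 1 \<le> i \<and> i \<le> m \<and> x i \<in> X) else 0)"

end

theory Submission
  imports Defs
begin

text \<open>Pointwise, each box contributes its claimed prize minus its opening cost. When the
  policy never opens a box with \<open>v i > z i\<close> without claiming it, this contribution splits as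
  the claimed covered call value \<open>\<kappa> i\<close> plus the opening surplus \<open>(v i - z i)\<^sup>+ - c i\<close> of
  an opened box. Whether box \<open>i\<close> is opened depends only on the prizes of earlier boxes, hence is
  independent of \<open>v i\<close>, and since \<open>E[(v i - z i)\<^sup>+] = c i\<close> every surplus term has mean zero.
  For an upward closed target \<open>X\<close> we have \<open>min (v i) (z i) \<in> X\<close> iff both \<open>v i\<close> and \<open>z i\<close> lie
  in \<open>X\<close>, so the thresholding policy claims box \<open>i\<close> exactly when \<open>\<kappa> i\<close> is the first covered
  call value in \<open>X\<close>, and the remaining sum is the value of the threshold stopping rule.\<close>

lemma min_mem_iff_if_upward_closed:
  fixes X :: "'b::linorder set"
  assumes "\<And>a b. a \<in> X \<Longrightarrow> a \<le> b \<Longrightarrow> b \<in> X"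
  shows "min a b \<in> X \<longleftrightarrow> a \<in> X \<and> b \<in> X"
  using assms by (auto simp: min_def)

lemma non_exposed_thr_policy:
  assumes "\<And>a b. a \<in> X \<Longrightarrow> a \<le> b \<Longrightarrow> b \<in> X"
  shows "non_exposed M m v z (thr_select z X v) (thr_open z X v)"
  unfolding non_exposed_def thr_select_def thr_open_def using assms by (meson less_imp_le)

lemma thr_select_iff_first_covered_call_in_target:
  assumes "\<And>a b. a \<in> X \<Longrightarrow> a \<le> b \<Longrightarrow> b \<in> X"
  shows "thr_select z X v i \<omega> \<longleftrightarrow>
    covered_call v z i \<omega> \<in> X \<and> (\<forall>j\<in>{1..<i}. covered_call v z j \<omega> \<notin> X)"
  by (auto simp: thr_select_def thr_open_def covered_call_def min_mem_iff_if_upward_closed[OF assms])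

lemma threshold_stop_value_eq_sum_first:
  "threshold_stop_value X m x = (\<Sum>i\<in>{1..m}. of_bool (x i \<in> X \<and> (\<forall>j\<in>{1..<i}. x j \<notin> X)) * x i)"
proof (cases "\<exists>i\<in>{1..m}. x i \<in> X")
  case True
  define l where "l = (LEAST i. 1 \<le> i \<and> i \<le> m \<and> x i \<in> X)"
  have l: "1 \<le> l \<and> l \<le> m \<and> x l \<in> X"
    unfolding l_def using True by (metis (mono_tags, lifting) LeastI atLeastAtMost_iff)
  have first_iff: "x i \<in> X \<and> (\<forall>j\<in>{1..<i}. x j \<notin> X) \<longleftrightarrow> i = l" if "i \<in> {1..m}" for i
    using that l Least_le[of "\<lambda>i. 1 \<le> i \<and> i \<le> m \<and> x i \<in> X"] unfolding l_def[symmetric]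
    by (metis atLeastAtMost_iff atLeastLessThan_iff le_less_trans less_le not_le)
  have "(\<Sum>i\<in>{1..m}. of_bool (x i \<in> X \<and> (\<forall>j\<in>{1..<i}. x j \<notin> X)) * x i)
      = (\<Sum>i\<in>{1..m}. if i = l then x i else 0)"
    using first_iff by (intro sum.cong) auto
  also have "\<dots> = x l"
    using l by (simp add: sum.delta)
  finally show ?thesis
    unfolding threshold_stop_value_def l_def[symmetric] using True by simp
qed (auto simp: threshold_stop_value_def intro!: sum.neutral)

lemma selected_minus_opened_eq_covered_call_plus_surplus:
  fixes x z c :: real
  assumes "a \<Longrightarrow> b" and "x > z \<Longrightarrow> a \<longleftrightarrow> b"
  shows "of_bool a * x - of_bool b * c = of_bool a * min x z + of_bool b * (max (x - z) 0 - c)"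
  using assms by (cases a; cases b; cases "x > z") (auto simp: min_def max_def)

lemma threshold_stop_value_covered_call:
  assumes "\<And>a b. a \<in> X \<Longrightarrow> a \<le> b \<Longrightarrow> b \<in> X"
  shows "threshold_stop_value X m (\<lambda>i. covered_call v z i \<omega>)
    = (\<Sum>i\<in>{1..m}. of_bool (thr_select z X v i \<omega>) * covered_call v z i \<omega>)"
  by (simp only: threshold_stop_value_eq_sum_first thr_select_iff_first_covered_call_in_target[OF assms])

lemma net_value_thr_eq_stop_plus_surplus:
  assumes "\<And>a b. a \<in> X \<Longrightarrow> a \<le> b \<Longrightarrow> b \<in> X"
  shows "net_value m c v (thr_select z X v) (thr_open z X v) \<omega>
    = threshold_stop_value X m (\<lambda>i. covered_call v z i \<omega>)
      + (\<Sum>i\<in>{1..m}. of_bool (thr_open z X v i \<omega>) * (max (v i \<omega> - z i) 0 - c i))"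
proof -
  have "net_value m c v (thr_select z X v) (thr_open z X v) \<omega>
      = (\<Sum>i\<in>{1..m}. of_bool (thr_select z X v i \<omega>) * v i \<omega> - of_bool (thr_open z X v i \<omega>) * c i)"
    unfolding net_value_def by (rule sum_subtractf[symmetric])
  also have "\<dots> = (\<Sum>i\<in>{1..m}. of_bool (thr_select z X v i \<omega>) * covered_call v z i \<omega>
      + of_bool (thr_open z X v i \<omega>) * (max (v i \<omega> - z i) 0 - c i))"
    unfolding covered_call_def
    by (intro sum.cong refl selected_minus_opened_eq_covered_call_plus_surplus)
       (use assms in \<open>auto simp: thr_select_def thr_open_def dest: less_imp_le\<close>)
  also have "\<dots> = threshold_stop_value X m (\<lambda>i. covered_call v z i \<omega>)
      + (\<Sum>i\<in>{1..m}. of_bool (thr_open z X v i \<omega>) * (max (v i \<omega> - z i) 0 - c i))"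
    by (simp only: sum.distrib threshold_stop_value_covered_call[OF assms])
  finally show ?thesis .
qed

lemma integrable_of_bool_mult:
  fixes f :: "'a \<Rightarrow> real"
  assumes "Measurable.pred M P" and "integrable M f"
  shows "integrable M (\<lambda>x. of_bool (P x) * f x)"
  by (rule Bochner_Integration.integrable_bound[OF assms(2)]) (use assms in auto)

locale exogenous_box_search = prob_space M for M :: "'a measure" +
  fixes m :: nat and v :: "nat \<Rightarrow> 'a \<Rightarrow> real" and z :: "nat \<Rightarrow> real" and X :: "real set"
  assumes measurable_prize[measurable]: "i \<in> {1..m} \<Longrightarrow> v i \<in> borel_measurable M"
    and indep_prizes: "indep_vars (\<lambda>_. borel) v {1..m}"
    and target_borel[measurable]: "X \<in> sets borel"
begin

lemma pred_thr_open[measurable]: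
  assumes "i \<in> {1..m}" shows "Measurable.pred M (thr_open z X v i)"
  unfolding thr_open_def by measurable (use assms in auto)

lemma expectation_opened_mult_prize:
  fixes g :: "real \<Rightarrow> real"
  assumes i: "i \<in> {1..m}" and [measurable]: "g \<in> borel_measurable borel"
    and "integrable M (\<lambda>\<omega>. g (v i \<omega>))"
  shows "expectation (\<lambda>\<omega>. of_bool (thr_open z X v i \<omega>) * g (v i \<omega>))
    = expectation (\<lambda>\<omega>. of_bool (thr_open z X v i \<omega>)) * expectation (\<lambda>\<omega>. g (v i \<omega>))"
proof -
  define earlier where "earlier \<omega> = restrict (\<lambda>j. v j \<omega>) {1..<i}" for \<omega>
  define current where "current \<omega> = restrict (\<lambda>j. v j \<omega>) {i}" for \<omega>
  define opened_given where
    "opened_given x = (of_bool (z i \<in> X \<and> (\<forall>j\<in>{1..<i}. \<not> (z j \<in> X \<and> x j \<in> X))) :: real)"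
    for x :: "nat \<Rightarrow> real"
  have [measurable]: "opened_given \<in> borel_measurable (PiM {1..<i} (\<lambda>_. borel))"
    unfolding opened_given_def by measurable
  have "indep_var (PiM {1..<i} (\<lambda>_. borel)) earlier (PiM {i} (\<lambda>_. borel)) current"
    unfolding earlier_def current_def using i by (intro indep_var_restrict[OF indep_prizes]) auto
  then have "indep_var borel (opened_given \<circ> earlier) borel ((\<lambda>x. g (x i)) \<circ> current)"
    by (rule indep_var_compose) measurable
  moreover have "opened_given \<circ> earlier = (\<lambda>\<omega>. of_bool (thr_open z X v i \<omega>))"
    by (auto simp: fun_eq_iff opened_given_def earlier_def thr_open_def)
  moreover have "(\<lambda>x. g (x i)) \<circ> current = (\<lambda>\<omega>. g (v i \<omega>))"
    by (auto simp: fun_eq_iff current_def)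
  moreover have "integrable M (\<lambda>\<omega>. (of_bool (thr_open z X v i \<omega>) :: real))"
    by (rule integrable_const_bound[where B=1]) (use i in auto)
  ultimately show ?thesis
    using indep_var_lebesgue_integral assms(3) by metis
qed

lemma pred_thr_select[measurable]:
  assumes "i \<in> {1..m}" shows "Measurable.pred M (thr_select z X v i)"
  unfolding thr_select_def using assms by measurable

lemma integrable_covered_call:
  assumes "i \<in> {1..m}" and "\<And>\<omega>. \<omega> \<in> space M \<Longrightarrow> v i \<omega> \<ge> 0"
  shows "integrable M (covered_call v z i)"
proof (rule integrable_const_bound[where B="\<bar>z i\<bar>"])
  show "AE \<omega> in M. norm (covered_call v z i \<omega>) \<le> \<bar>z i\<bar>"
    by (intro AE_I2) (use assms(2) in \<open>auto simp: covered_call_def min_def\<close>)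
  show "covered_call v z i \<in> borel_measurable M"
    unfolding covered_call_def using assms(1) by measurable
qed

lemma expectation_opened_surplus:
  assumes i: "i \<in> {1..m}" and "integrable M (\<lambda>\<omega>. max (v i \<omega> - z i) 0)"
    and "expectation (\<lambda>\<omega>. max (v i \<omega> - z i) 0) = c"
  shows "expectation (\<lambda>\<omega>. of_bool (thr_open z X v i \<omega>) * (max (v i \<omega> - z i) 0 - c)) = 0"
proof -
  have "expectation (\<lambda>\<omega>. of_bool (thr_open z X v i \<omega>) * (max (v i \<omega> - z i) 0 - c))
      = expectation (\<lambda>\<omega>. of_bool (thr_open z X v i \<omega>) * max (v i \<omega> - z i) 0)
        - expectation (\<lambda>\<omega>. of_bool (thr_open z X v i \<omega>) * c)"
    unfolding right_diff_distrib using i assms(2)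
    by (intro Bochner_Integration.integral_diff integrable_of_bool_mult) auto
  also have "\<dots> = 0"
    using expectation_opened_mult_prize[OF i _ assms(2)] assms(3) by simp
  finally show ?thesis .
qed

lemma expectation_net_value_thr:
  assumes up: "\<And>a b. a \<in> X \<Longrightarrow> a \<le> b \<Longrightarrow> b \<in> X"
    and nonneg: "\<And>i \<omega>. i \<in> {1..m} \<Longrightarrow> \<omega> \<in> space M \<Longrightarrow> v i \<omega> \<ge> 0"
    and surplus_int: "\<And>i. i \<in> {1..m} \<Longrightarrow> integrable M (\<lambda>\<omega>. max (v i \<omega> - z i) 0)"
    and surplus_eq: "\<And>i. i \<in> {1..m} \<Longrightarrow> expectation (\<lambda>\<omega>. max (v i \<omega> - z i) 0) = c i"
  shows "expectation (net_value m c v (thr_select z X v) (thr_open z X v))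
    = expectation (\<lambda>\<omega>. threshold_stop_value X m (\<lambda>i. covered_call v z i \<omega>))"
proof -
  let ?stop = "\<lambda>\<omega>. threshold_stop_value X m (\<lambda>i. covered_call v z i \<omega>)"
  let ?surplus = "\<lambda>i \<omega>. of_bool (thr_open z X v i \<omega>) * (max (v i \<omega> - z i) 0 - c i)"
  have stop_eq: "?stop \<omega> = (\<Sum>i\<in>{1..m}. of_bool (thr_select z X v i \<omega>) * covered_call v z i \<omega>)"
    for \<omega> by (rule threshold_stop_value_covered_call[OF up])
  have stop_int: "integrable M ?stop"
    unfolding stop_eq
    using nonneg by (intro Bochner_Integration.integrable_sum integrable_of_bool_mult integrable_covered_call) auto
  have surplus_mult_int: "integrable M (?surplus i)" if "i \<in> {1..m}" for i
    using that surplus_int by (intro integrable_of_bool_mult) auto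
  have "net_value m c v (thr_select z X v) (thr_open z X v)
      = (\<lambda>\<omega>. ?stop \<omega> + (\<Sum>i\<in>{1..m}. ?surplus i \<omega>))"
    by (rule ext, rule net_value_thr_eq_stop_plus_surplus[OF up])
  then have "expectation (net_value m c v (thr_select z X v) (thr_open z X v))
      = expectation ?stop + (\<Sum>i\<in>{1..m}. expectation (?surplus i))"
    using stop_int surplus_mult_int
    by (simp only: Bochner_Integration.integral_add Bochner_Integration.integrable_sum
        Bochner_Integration.integral_sum)
  also have "(\<Sum>i\<in>{1..m}. expectation (?surplus i)) = 0"
    using surplus_int surplus_eq by (intro sum.neutral ballI expectation_opened_surplus) auto
  finally show ?thesis by simp
qed

end

theorem mainTheorem11:
  fixes M :: "'a measure" and m :: nat and v :: "nat \<Rightarrow> 'a \<Rightarrow> real"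
    and c z :: "nat \<Rightarrow> real" and X :: "real set" and \<theta> :: real
  assumes "prob_space M"
    and "\<forall>i\<in>{1..m}. v i \<in> borel_measurable M"
    and "prob_space.indep_vars M (\<lambda>_. borel) v {1..m}"
    and "\<forall>i\<in>{1..m}. \<forall>\<omega>\<in>space M. v i \<omega> \<ge> 0"
    and "\<forall>i\<in>{1..m}. c i \<ge> 0"
    and "\<forall>i\<in>{1..m}. integrable M (\<lambda>\<omega>. max (v i \<omega> - z i) 0)"
    and "\<forall>i\<in>{1..m}. prob_space.expectation M (\<lambda>\<omega>. max (v i \<omega> - z i) 0) = c i"
    and "X = {\<theta><..} \<or> X = {\<theta>..}"
  shows "non_exposed M m v z (thr_select z X v) (thr_open z X v)
       \<and> prob_space.expectation M (net_value m c v (thr_select z X v) (thr_open z X v))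
         = prob_space.expectation M
             (\<lambda>\<omega>. threshold_stop_value X m (\<lambda>i. covered_call v z i \<omega>))"
proof -
  have up: "\<And>a b. a \<in> X \<Longrightarrow> a \<le> b \<Longrightarrow> b \<in> X"
    using assms(8) by auto
  have "X \<in> sets borel"
    using assms(8) by auto
  then interpret exogenous_box_search M m v z X
    using assms(1-3) by (intro exogenous_box_search.intro exogenous_box_search_axioms.intro) simp_all
  show ?thesis
    using non_exposed_thr_policy[OF up] expectation_net_value_thr[OF up] assms(4,6,7) by simp
qed

end
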